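(* Let $p\ge 2$ be an integer, $0\le t\le 1$ and $u>0$, and let $D=\mathrm{DASEP}(3,p,2)$ with stationary distribution $\mathrm{Pd}$. Then the following are equivalent: (i) $t=1$; (ii) for every partition $\lambda=(\lambda_1\ge\lambda_2\ge\lambda_3\ge0)$ with $\lambda_1\le p$ and exactly $2$ nonzero parts, and all $\mu,\nu\in S_3(\lambda)$, $$\frac{\Pr_\lambda(\mu)}{\Pr_\lambda(\nu)}=\frac{\mathrm{Pd}(\mu)}{\mathrm{Pd}(\nu)}.$$
   Context: For a partition $\lambda=(\lambda_1\ge\dots\ge\lambda_n\ge 0)$ of nonnegative integers, $S_n(\lambda)$ denotes the set of all distinct rearrangements of $\lambda$, viewed as words $(\mu_1,\dots,\mu_n)$ whose positions $1,\dots,n$ lie on a circle. Fix $0\le t\le 1$. ASEP($\lambda$) is the Markov chain on $S_n(\lambda)$ with transition probabilities $P_{\mu,\nu}$ defined as follows. If $\mu$ has entries $i\ne j$ in adjacent positions $k,k+1$ ($1\le k\le n-1$) and $\nu$ is obtained from $\mu$ by swapping them, then $P_{\mu,\nu}=t/n$ if $i>j$ and $P_{\mu,\nu}=1/n$ if $i<j$. If $\mu=(i,\mu_2,\dots,\mu_{n-1},j)$ with $i\ne j$ and $\nu=(j,\mu_2,\dots,\mu_{n-1},i)$, then $P_{\mu,\nu}=t/n$ if $j>i$ and $P_{\mu,\nu}=1/n$ if $i>j$. All other off-diagonal transition probabilities are $0$, and the diagonal entries are chosen so that each row sums to $1$. $\Pr_\lambda$ denotes the stationary distribution of ASEP($\lambda$).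 Fix also $u>0$. For positive integers $n,p,q$ with $n>q$, DASEP$(n,p,q)$ is the Markov chain on the set of words in $\{0,1,\dots,p\}^n$ with exactly $q$ nonzero entries (equivalently, the union of $S_n(\lambda)$ over partitions $\lambda$ with $\lambda_1\le p$ and exactly $q$ nonzero parts). Its transition probabilities are as follows. The two swap rules of ASEP apply, with probabilities $t/(3n)$ and $1/(3n)$ in place of $t/n$ and $1/n$. Replacing a single entry $i$ with $1\le i\le p-1$ by $i+1$ has probability $u/(3n)$. Replacing a single entry $i+1$ with $i\ge 1$ by $i$ has probability $1/(3n)$. All other off-diagonal transition probabilities are $0$, and the diagonal entries make each row sum to $1$. $\mathrm{Pd}$ denotes the stationary distribution of the DASEP. *)

theory Defs
  imports Complex_Main "HOL-Library.Multiset"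
begin

text \<open>Words are lists of natural numbers of length n; position k (1-based in the paper)
is index k-1 here. A finite Markov chain on a state set S is given by its off-diagonal
transition probabilities w x y (x \<noteq> y); the diagonal entry is chosen so that rows sum to 1.\<close>

definition markov_P :: "'a set \<Rightarrow> ('a \<Rightarrow> 'a \<Rightarrow> real) \<Rightarrow> 'a \<Rightarrow> 'a \<Rightarrow> real" where
  "markov_P S w x y = (if x = y then 1 - (\<Sum>z\<in>S - {x}. w x z) else w x y)"

definition is_stationary :: "'a set \<Rightarrow> ('a \<Rightarrow> 'a \<Rightarrow> real) \<Rightarrow> ('a \<Rightarrow> real) \<Rightarrow> bool" where
  "is_stationary S w \<pi> \<longleftrightarrow>
     (\<forall>x. x \<notin> S \<longrightarrow> \<pi> x = 0) \<and> (\<forall>x\<in>S. 0 \<le> \<pi> x) \<and> sum \<pi> S = 1 \<and>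
     (\<forall>y\<in>S. (\<Sum>x\<in>S. \<pi> x * markov_P S w x y) = \<pi> y)"

definition stationary_dist :: "'a set \<Rightarrow> ('a \<Rightarrow> 'a \<Rightarrow> real) \<Rightarrow> 'a \<Rightarrow> real" where
  "stationary_dist S w = (THE \<pi>. is_stationary S w \<pi>)"

definition swap_at :: "nat list \<Rightarrow> nat \<Rightarrow> nat \<Rightarrow> nat list" where
  "swap_at \<mu> i j = \<mu>[i := \<mu> ! j, j := \<mu> ! i]"

definition rearrangements :: "nat list \<Rightarrow> nat list set" where
  "rearrangements lam = {\<mu>. mset \<mu> = mset lam}"

definition is_partition :: "nat \<Rightarrow> nat list \<Rightarrow> bool" where
  "is_partition n lam \<longleftrightarrow> length lam = n \<and> sorted (rev lam)"

definition num_nonzero :: "nat list \<Rightarrow> nat" where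
  "num_nonzero \<mu> = length (filter (\<lambda>x. x \<noteq> 0) \<mu>)"

text \<open>Swap moves of the ASEP, with rates a (for the "t" moves) and b (for the "1" moves),
summed over the operations producing nu (for n \<ge> 3 at most one operation produces nu).\<close>
definition swap_weight :: "real \<Rightarrow> real \<Rightarrow> nat list \<Rightarrow> nat list \<Rightarrow> real" where
  "swap_weight a b \<mu> \<nu> =
     (let n = length \<mu> in
      (\<Sum>k\<in>{0..<n-1}. if \<mu> ! k \<noteq> \<mu> ! (k+1) \<and> \<nu> = swap_at \<mu> k (k+1)
                        then (if \<mu> ! k > \<mu> ! (k+1) then a else b) else 0)
      + (if 2 \<le> n \<and> \<mu> ! 0 \<noteq> \<mu> ! (n-1) \<and> \<nu> = swap_at \<mu> 0 (n-1)
         then (if \<mu> ! (n-1) > \<mu> ! 0 then a else b) else 0))"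

definition ASEP_w :: "real \<Rightarrow> nat list \<Rightarrow> nat list \<Rightarrow> real" where
  "ASEP_w t \<mu> \<nu> = swap_weight (t / length \<mu>) (1 / length \<mu>) \<mu> \<nu>"

definition ASEP_Pr :: "real \<Rightarrow> nat list \<Rightarrow> nat list \<Rightarrow> real" where
  "ASEP_Pr t lam = stationary_dist (rearrangements lam) (ASEP_w t)"

definition DASEP_states :: "nat \<Rightarrow> nat \<Rightarrow> nat \<Rightarrow> nat list set" where
  "DASEP_states n p q = {\<mu>. length \<mu> = n \<and> set \<mu> \<subseteq> {0..p} \<and> num_nonzero \<mu> = q}"

definition DASEP_w :: "nat \<Rightarrow> real \<Rightarrow> real \<Rightarrow> nat list \<Rightarrow> nat list \<Rightarrow> real" where
  "DASEP_w p t u \<mu> \<nu> =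
     (let n = length \<mu> in
      swap_weight (t / (3 * n)) (1 / (3 * n)) \<mu> \<nu>
      + (\<Sum>k\<in>{0..<n}. (if 1 \<le> \<mu> ! k \<and> \<mu> ! k \<le> p - 1 \<and> \<nu> = \<mu>[k := \<mu> ! k + 1]
                         then u / (3 * n) else 0)
                      + (if 2 \<le> \<mu> ! k \<and> \<nu> = \<mu>[k := \<mu> ! k - 1]
                         then 1 / (3 * n) else 0)))"

definition DASEP_Pd :: "nat \<Rightarrow> nat \<Rightarrow> nat \<Rightarrow> real \<Rightarrow> real \<Rightarrow> nat list \<Rightarrow> real" where
  "DASEP_Pd n p q t u = stationary_dist (DASEP_states n p q) (DASEP_w p t u)"

end

theory Submission
  imports Defs
begin

text \<open>Both chains are finite and irreducible, so their stationary distributions are fixed by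
  the balance equations, and stationary ratios can be read off any positive balanced vector.
  On the rearrangements of \<open>(a, b, 0)\<close> the three-site ASEP has the balanced weights
  \<open>2(2 + t)\<close> on cyclically decreasing words and \<open>2(1 + 2t)\<close> on cyclically increasing ones.
  At \<open>t = 1\<close> these weights are constant, and the DASEP satisfies detailed balance with the
  weights \<open>u ^ |\<mu>|\<close>, which are constant on every class as well, so all ratios equal 1.
  Conversely, suppose the DASEP were proportional to the ASEP on every class. Pair each
  cyclically decreasing word with its reversal: the stationary expectation of the drift of the
  cyclic orientation becomes a sum of terms of sign \<open>t - 1\<close>, nonzero at \<open>(2, 1, 0)\<close>.
  Stationarity forces this expectation to vanish, hence \<open>t = 1\<close>.\<close>

section \<open>Stationary distributions of finite Markov chains\<close>

definition balanced :: "'a set \<Rightarrow> ('a \<Rightarrow> 'a \<Rightarrow> real) \<Rightarrow> ('a \<Rightarrow> real) \<Rightarrow> bool" where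
  "balanced S w \<pi> \<longleftrightarrow> (\<forall>y\<in>S. (\<Sum>x\<in>S-{y}. \<pi> x * w x y) = \<pi> y * (\<Sum>z\<in>S-{y}. w y z))"

definition nonneg_rates :: "'a set \<Rightarrow> ('a \<Rightarrow> 'a \<Rightarrow> real) \<Rightarrow> bool" where
  "nonneg_rates S w \<longleftrightarrow> (\<forall>x\<in>S. \<forall>y\<in>S. 0 \<le> w x y)"

definition transition_graph :: "'a set \<Rightarrow> ('a \<Rightarrow> 'a \<Rightarrow> real) \<Rightarrow> ('a \<times> 'a) set" where
  "transition_graph S w = {(x, y). x \<in> S \<and> y \<in> S \<and> x \<noteq> y \<and> 0 < w x y}"

definition irreducible_chain :: "'a set \<Rightarrow> ('a \<Rightarrow> 'a \<Rightarrow> real) \<Rightarrow> bool" where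
  "irreducible_chain S w \<longleftrightarrow> (\<forall>x\<in>S. \<forall>y\<in>S. (x, y) \<in> (transition_graph S w)\<^sup>*)"

lemma transition_graphI:
  "x \<in> S \<Longrightarrow> y \<in> S \<Longrightarrow> x \<noteq> y \<Longrightarrow> 0 < c \<Longrightarrow> c \<le> w x y \<Longrightarrow> (x, y) \<in> transition_graph S w"
  by (auto simp: transition_graph_def)

lemma rtrancl_cycle:
  assumes "set (zip cs (rotate1 cs)) \<subseteq> E" "x \<in> set cs" "y \<in> set cs"
  shows "(x, y) \<in> E\<^sup>*"
proof -
  define n where "n = length cs"
  have step: "(cs ! i, cs ! (Suc i mod n)) \<in> E" if "i < n" for i
  proof -
    have "(cs ! i, rotate1 cs ! i) \<in> set (zip cs (rotate1 cs))"
      using that by (metis length_rotate1 length_zip min.idem n_def nth_mem nth_zip)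
    with assms(1) that show ?thesis by (auto simp: nth_rotate1 n_def)
  qed
  obtain i j where ij: "i < n" "j < n" "x = cs ! i" "y = cs ! j"
    using assms(2,3) by (metis in_set_conv_nth n_def)
  have "(cs ! i, cs ! ((i + k) mod n)) \<in> E\<^sup>*" for k
  proof (induction k)
    case (Suc k)
    have "(i + Suc k) mod n = Suc ((i + k) mod n) mod n" by (simp add: mod_Suc_eq)
    with Suc step[of "(i + k) mod n"] ij(1) show ?case
      by (metis mod_less_divisor gr_implies_not0 neq0_conv rtrancl_into_rtrancl)
  qed (use ij in simp)
  from this[of "n - i + j"] ij show ?thesis by simp
qed

lemma balanced_cong:
  "(\<And>x. x \<in> S \<Longrightarrow> \<pi> x = \<pi>' x) \<Longrightarrow> balanced S w \<pi> \<longleftrightarrow> balanced S w \<pi>'"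
  by (simp add: balanced_def)

lemma balanced_lincomb:
  assumes "balanced S w \<pi>" "balanced S w \<rho>"
  shows "balanced S w (\<lambda>x. c * \<pi> x + d * \<rho> x)"
  using assms
  by (simp add: balanced_def algebra_simps sum.distrib flip: sum_distrib_left)

lemma detailed_balance_imp_balanced:
  assumes "\<And>x y. x \<in> S \<Longrightarrow> y \<in> S \<Longrightarrow> \<pi> x * w x y = \<pi> y * w y x"
  shows "balanced S w \<pi>"
  unfolding balanced_def sum_distrib_left using assms by (auto intro: sum.cong)

lemma is_stationary_iff_balanced:
  assumes "finite S"
  shows "is_stationary S w \<pi> \<longleftrightarrow>
    (\<forall>x. x \<notin> S \<longrightarrow> \<pi> x = 0) \<and> (\<forall>x\<in>S. 0 \<le> \<pi> x) \<and> sum \<pi> S = 1 \<and> balanced S w \<pi>"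
proof -
  have "(\<Sum>x\<in>S. \<pi> x * markov_P S w x y)
      = \<pi> y - \<pi> y * (\<Sum>z\<in>S-{y}. w y z) + (\<Sum>x\<in>S-{y}. \<pi> x * w x y)" if "y \<in> S" for y
  proof -
    have "(\<Sum>x\<in>S. \<pi> x * markov_P S w x y) = \<pi> y * markov_P S w y y + (\<Sum>x\<in>S-{y}. \<pi> x * markov_P S w x y)"
      using assms that by (simp add: sum.remove)
    also have "(\<Sum>x\<in>S-{y}. \<pi> x * markov_P S w x y) = (\<Sum>x\<in>S-{y}. \<pi> x * w x y)"
      by (rule sum.cong) (auto simp: markov_P_def)
    finally show ?thesis by (simp add: markov_P_def algebra_simps)
  qed
  then show ?thesis by (auto simp: is_stationary_def balanced_def)
qed

lemma balanced_point_mass: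
  assumes "\<And>y. y \<in> S - {z} \<Longrightarrow> w z y = 0"
  shows "balanced S w (\<lambda>x. if x = z then 1 else 0)"
  using assms by (auto simp: balanced_def intro!: sum.neutral split: if_splits)

text \<open>Censoring the chain to \<open>F\<close>, i.e. watching it only while it is outside \<open>z\<close>, gives the
  rates \<open>w x y + w x z * w z y / W\<close> with \<open>W\<close> the total rate out of \<open>z\<close>. A balanced vector of
  the censored chain extends to the full chain by choosing the mass at \<open>z\<close> so that the flow
  into \<open>z\<close> equals the flow out of it.\<close>

lemma balanced_insert_censored:
  assumes fin: "finite F" and z: "z \<notin> F" and W: "W = (\<Sum>v\<in>F. w z v)" "0 < W"
    and bal: "balanced F (\<lambda>x y. w x y + w x z * w z y / W) \<pi>"
  shows "balanced (insert z F) w (\<pi>(z := (\<Sum>v\<in>F. \<pi> v * w v z) / W))"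
    (is "balanced _ _ ?\<pi>")
  unfolding balanced_def
proof
  fix y assume "y \<in> insert z F"
  then consider "y = z" | "y \<in> F" by blast
  then show "(\<Sum>x\<in>insert z F - {y}. ?\<pi> x * w x y) = ?\<pi> y * (\<Sum>v\<in>insert z F - {y}. w y v)"
  proof cases
    case 1
    have "(\<Sum>x\<in>insert z F - {y}. ?\<pi> x * w x y) = (\<Sum>x\<in>F. \<pi> x * w x z)"
      using 1 z by (intro sum.cong) auto
    then show ?thesis using 1 z W by simp
  next
    case 2
    define F' where "F' = F - {y}"
    have y: "y \<noteq> z" "insert z F - {y} = insert z F'" "z \<notin> F'" "finite F'"
      using 2 z fin by (auto simp: F'_def)
    define inflow where "inflow = (\<Sum>x\<in>F'. \<pi> x * w x z)"
    have W_split: "W = (\<Sum>v\<in>F'. w z v) + w z y"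
      unfolding W F'_def using 2 fin by (simp add: sum.remove)
    have z_split: "(\<Sum>v\<in>F. \<pi> v * w v z) = inflow + \<pi> y * w y z"
      unfolding inflow_def F'_def using 2 fin by (simp add: sum.remove)
    have "(\<Sum>x\<in>F'. \<pi> x * (w x y + w x z * w z y / W)) = \<pi> y * (\<Sum>v\<in>F'. w y v + w y z * w z v / W)"
      using bal 2 by (simp add: balanced_def F'_def)
    then have censored: "(\<Sum>x\<in>F'. \<pi> x * w x y) + inflow * w z y / W
        = \<pi> y * ((\<Sum>v\<in>F'. w y v) + w y z * (\<Sum>v\<in>F'. w z v) / W)"
      by (simp add: inflow_def algebra_simps sum.distrib sum_distrib_left sum_divide_distrib)
    have "(\<Sum>x\<in>insert z F - {y}. ?\<pi> x * w x y) = ?\<pi> z * w z y + (\<Sum>x\<in>F'. \<pi> x * w x y)"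
      using y z by (simp add: F'_def) (intro sum.cong, auto)
    also have "\<dots> = \<pi> y * ((\<Sum>v\<in>F'. w y v) + w y z * ((\<Sum>v\<in>F'. w z v) + w z y) / W)"
      using censored z_split by (simp add: algebra_simps add_divide_distrib)
    also have "\<dots> = \<pi> y * ((\<Sum>v\<in>F'. w y v) + w y z)"
      using W_split W(2) by simp
    also have "\<dots> = ?\<pi> y * (\<Sum>v\<in>insert z F - {y}. w y v)"
      using y by simp
    finally show ?thesis .
  qed
qed

lemma balanced_exists:
  assumes "finite S" "S \<noteq> {}" "nonneg_rates S w"
  shows "\<exists>\<pi>. (\<forall>x\<in>S. 0 \<le> \<pi> x) \<and> 0 < sum \<pi> S \<and> balanced S w \<pi>"
  using assms
proof (induction S arbitrary: w rule: finite_ne_induct)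
  case (singleton x)
  show ?case by (rule exI[of _ "\<lambda>_. 1"]) (simp add: balanced_def)
next
  case (insert z F)
  define W where "W = (\<Sum>v\<in>F. w z v)"
  have nonneg: "\<And>x y. x \<in> insert z F \<Longrightarrow> y \<in> insert z F \<Longrightarrow> 0 \<le> w x y"
    using insert.prems by (auto simp: nonneg_rates_def)
  then have "0 \<le> W" unfolding W_def by (intro sum_nonneg) auto
  then consider "W = 0" | "0 < W" by linarith
  then show ?case
  proof cases
    case 1
    then have "\<And>y. y \<in> insert z F - {z} \<Longrightarrow> w z y = 0"
      using insert.hyps nonneg unfolding W_def by (subst (asm) sum_nonneg_eq_0_iff) auto
    then show ?thesis
      using balanced_point_mass[of "insert z F" z w] insert.hyps
      by (intro exI[of _ "\<lambda>x. if x = z then 1 else 0"]) auto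
  next
    case 2
    define w' where "w' = (\<lambda>x y. w x y + w x z * w z y / W)"
    have "nonneg_rates F w'"
      unfolding nonneg_rates_def w'_def using nonneg 2 by (auto intro!: add_nonneg_nonneg)
    then obtain \<pi> where \<pi>: "\<forall>x\<in>F. 0 \<le> \<pi> x" "0 < sum \<pi> F" "balanced F w' \<pi>"
      using insert.IH by blast
    define \<pi>z where "\<pi>z = (\<Sum>v\<in>F. \<pi> v * w v z) / W"
    have "0 \<le> \<pi>z" unfolding \<pi>z_def using \<pi>(1) nonneg 2 by (auto intro!: divide_nonneg_pos sum_nonneg)
    then have "\<forall>x\<in>insert z F. 0 \<le> (\<pi>(z := \<pi>z)) x" using \<pi>(1) by simp
    moreover have "0 < sum (\<pi>(z := \<pi>z)) (insert z F)"
      using insert.hyps \<pi>(2) \<open>0 \<le> \<pi>z\<close>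
      by (metis add_nonneg_pos fun_upd_other fun_upd_same sum.cong sum.insert)
    moreover have "balanced (insert z F) w (\<pi>(z := \<pi>z))"
      unfolding \<pi>z_def
      using balanced_insert_censored[OF _ _ W_def 2 \<pi>(3)[unfolded w'_def]] insert.hyps by simp
    ultimately show ?thesis by blast
  qed
qed

lemma balanced_zero_backward:
  assumes "finite S" "nonneg_rates S w" "\<forall>x\<in>S. 0 \<le> \<pi> x" "balanced S w \<pi>"
    and "(x, y) \<in> (transition_graph S w)\<^sup>*" "\<pi> y = 0"
  shows "\<pi> x = 0"
  using assms(5,6)
proof (induction rule: converse_rtrancl_induct)
  case (step x x')
  then have x: "x \<in> S" "x' \<in> S" "x \<noteq> x'" "0 < w x x'" and "\<pi> x' = 0"
    by (auto simp: transition_graph_def)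
  then have "(\<Sum>v\<in>S-{x'}. \<pi> v * w v x') = 0"
    using assms(4) by (simp add: balanced_def)
  moreover have "\<forall>v\<in>S-{x'}. 0 \<le> \<pi> v * w v x'"
    using assms(2,3) x by (auto simp: nonneg_rates_def)
  ultimately have "\<pi> x * w x x' = 0"
    using assms(1) x by (subst (asm) sum_nonneg_eq_0_iff) auto
  then show ?case using x by simp
qed

lemma balanced_pos:
  assumes "finite S" "nonneg_rates S w" "irreducible_chain S w"
    and "\<forall>x\<in>S. 0 \<le> \<pi> x" "balanced S w \<pi>" "sum \<pi> S \<noteq> 0" "x \<in> S"
  shows "0 < \<pi> x"
proof (rule ccontr)
  assume "\<not> 0 < \<pi> x"
  with assms have "\<pi> x = 0" by force
  with assms have "\<forall>y\<in>S. \<pi> y = 0"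
    using balanced_zero_backward unfolding irreducible_chain_def by metis
  with assms(6) show False by simp
qed

text \<open>Subtracting from one balanced vector the largest multiple of the other that stays
  below it leaves a nonnegative balanced vector with a zero, which then vanishes everywhere.\<close>

lemma balanced_unique:
  assumes S: "finite S" "nonneg_rates S w" "irreducible_chain S w"
    and \<pi>: "\<forall>x\<in>S. 0 \<le> \<pi> x" "sum \<pi> S = 1" "balanced S w \<pi>"
    and \<rho>: "\<forall>x\<in>S. 0 \<le> \<rho> x" "sum \<rho> S = 1" "balanced S w \<rho>"
    and "x \<in> S"
  shows "\<pi> x = \<rho> x"
proof -
  have \<rho>_pos: "\<forall>x\<in>S. 0 < \<rho> x" using balanced_pos[OF S \<rho>(1,3)] \<rho>(2) by simp
  define c where "c = Min ((\<lambda>x. \<pi> x / \<rho> x) ` S)"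
  have "c \<in> (\<lambda>x. \<pi> x / \<rho> x) ` S"
    unfolding c_def using S(1) \<open>x \<in> S\<close> by (intro Min_in) auto
  then obtain m where m: "m \<in> S" "c = \<pi> m / \<rho> m" by blast
  define v where "v = (\<lambda>x. \<pi> x - c * \<rho> x)"
  have "\<forall>x\<in>S. 0 \<le> v x"
  proof
    fix x assume "x \<in> S"
    then have "c \<le> \<pi> x / \<rho> x" unfolding c_def using S(1) by auto
    with \<rho>_pos \<open>x \<in> S\<close> show "0 \<le> v x" by (simp add: v_def pos_le_divide_eq)
  qed
  moreover have "v m = 0" using m \<rho>_pos by (simp add: v_def less_imp_neq[symmetric])
  moreover have "balanced S w v"
    using balanced_lincomb[OF \<pi>(3) \<rho>(3), of 1 "- c"] by (simp add: v_def)
  ultimately have v0: "\<forall>y\<in>S. v y = 0"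
    using balanced_zero_backward[OF S(1,2)] S(3) m(1) unfolding irreducible_chain_def by metis
  then have "sum \<pi> S = c * sum \<rho> S" by (simp add: v_def sum_distrib_left)
  with \<pi>(2) \<rho>(2) have "c = 1" by simp
  with v0 \<open>x \<in> S\<close> show ?thesis by (simp add: v_def)
qed

lemma stationary_dist_eqI:
  assumes S: "finite S" "nonneg_rates S w" "irreducible_chain S w"
    and \<pi>: "\<forall>x. x \<notin> S \<longrightarrow> \<pi> x = 0" "\<forall>x\<in>S. 0 \<le> \<pi> x" "sum \<pi> S = 1" "balanced S w \<pi>"
  shows "stationary_dist S w = \<pi>"
  unfolding stationary_dist_def
proof (rule the_equality)
  show "is_stationary S w \<pi>" using S(1) \<pi> by (simp add: is_stationary_iff_balanced)
  fix \<rho> assume "is_stationary S w \<rho>"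
  then have \<rho>: "\<forall>x. x \<notin> S \<longrightarrow> \<rho> x = 0" "\<forall>x\<in>S. 0 \<le> \<rho> x" "sum \<rho> S = 1" "balanced S w \<rho>"
    using S(1) by (simp_all add: is_stationary_iff_balanced)
  show "\<rho> = \<pi>"
  proof
    fix x show "\<rho> x = \<pi> x"
      using balanced_unique[OF S \<rho>(2-4) \<pi>(2-4)] \<rho>(1) \<pi>(1) by (cases "x \<in> S") auto
  qed
qed

lemma balanced_normalized:
  assumes "balanced S w \<pi>"
  shows "balanced S w (\<lambda>x. if x \<in> S then \<pi> x / sum \<pi> S else 0)"
proof -
  have "balanced S w (\<lambda>x. (1 / sum \<pi> S) * \<pi> x + 0 * \<pi> x)"
    by (rule balanced_lincomb[OF assms assms])
  moreover have "balanced S w (\<lambda>x. (1 / sum \<pi> S) * \<pi> x + 0 * \<pi> x) \<longleftrightarrow> ?thesis"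
    by (rule balanced_cong) simp
  ultimately show ?thesis by blast
qed

lemma stationary_dist_normalize:
  assumes S: "finite S" "nonneg_rates S w" "irreducible_chain S w"
    and \<pi>: "\<forall>x\<in>S. 0 \<le> \<pi> x" "0 < sum \<pi> S" "balanced S w \<pi>"
  shows "stationary_dist S w = (\<lambda>x. if x \<in> S then \<pi> x / sum \<pi> S else 0)"
proof (rule stationary_dist_eqI[OF S])
  have "(\<Sum>x\<in>S. if x \<in> S then \<pi> x / sum \<pi> S else 0) = (\<Sum>x\<in>S. \<pi> x) / sum \<pi> S"
    by (simp add: sum_divide_distrib[symmetric])
  then show "(\<Sum>x\<in>S. if x \<in> S then \<pi> x / sum \<pi> S else 0) = 1" using \<pi>(2) by simp
qed (use \<pi> balanced_normalized in auto)

lemma stationary_dist_ratio: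
  assumes "finite S" "nonneg_rates S w" "irreducible_chain S w"
    and "\<forall>x\<in>S. 0 < \<pi> x" "balanced S w \<pi>" "x \<in> S" "y \<in> S"
  shows "stationary_dist S w x / stationary_dist S w y = \<pi> x / \<pi> y"
proof -
  have "0 < sum \<pi> S" using assms by (intro sum_pos) auto
  with assms show ?thesis
    by (simp add: stationary_dist_normalize[OF assms(1-3), of \<pi>] less_imp_le)
qed

lemma stationary_dist_balanced_pos:
  assumes "finite S" "S \<noteq> {}" "nonneg_rates S w" "irreducible_chain S w"
  shows "balanced S w (stationary_dist S w) \<and> (\<forall>x\<in>S. 0 < stationary_dist S w x)"
proof -
  obtain \<pi> where \<pi>: "\<forall>x\<in>S. 0 \<le> \<pi> x" "0 < sum \<pi> S" "balanced S w \<pi>"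
    using balanced_exists[OF assms(1-3)] by blast
  have "\<forall>x\<in>S. 0 < \<pi> x" using balanced_pos[OF assms(1,3,4) \<pi>(1,3)] \<pi>(2) by simp
  then show ?thesis
    using \<pi>(2) balanced_normalized[OF \<pi>(3)] stationary_dist_normalize[OF assms(1,3,4) \<pi>] by simp
qed

lemma balanced_generator_sum:
  assumes "finite S" "balanced S w \<pi>"
  shows "(\<Sum>x\<in>S. \<pi> x * (\<Sum>y\<in>S-{x}. w x y * (f y - f x))) = 0"
proof -
  have swap: "(\<Sum>x\<in>S. \<Sum>y\<in>S-{x}. g x y) = (\<Sum>y\<in>S. \<Sum>x\<in>S-{y}. g x y)" for g :: "_ \<Rightarrow> _ \<Rightarrow> real"
  proof -
    have "(\<Sum>x\<in>S. \<Sum>y\<in>S-{x}. g x y) = (\<Sum>x\<in>S. \<Sum>y\<in>S. if x = y then 0 else g x y)"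
      using assms(1) by (simp add: sum.If_cases Diff_eq Int_commute)
    also have "\<dots> = (\<Sum>y\<in>S. \<Sum>x\<in>S. if x = y then 0 else g x y)" by (rule sum.swap)
    also have "\<dots> = (\<Sum>y\<in>S. \<Sum>x\<in>S-{y}. g x y)"
      using assms(1) by (simp add: sum.If_cases Diff_eq Int_commute)
    finally show ?thesis .
  qed
  have "(\<Sum>x\<in>S. \<pi> x * (\<Sum>y\<in>S-{x}. w x y * (f y - f x)))
      = (\<Sum>x\<in>S. \<Sum>y\<in>S-{x}. \<pi> x * w x y * f y) - (\<Sum>x\<in>S. f x * (\<pi> x * (\<Sum>y\<in>S-{x}. w x y)))"
    by (simp add: sum_subtractf[symmetric] sum_distrib_left algebra_simps)
  also have "(\<Sum>x\<in>S. \<Sum>y\<in>S-{x}. \<pi> x * w x y * f y) = (\<Sum>y\<in>S. \<Sum>x\<in>S-{y}. \<pi> x * w x y * f y)"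
    by (rule swap)
  also have "\<dots> = (\<Sum>y\<in>S. f y * (\<Sum>x\<in>S-{y}. \<pi> x * w x y))"
    by (simp add: sum_distrib_left algebra_simps)
  also have "\<dots> = (\<Sum>y\<in>S. f y * (\<pi> y * (\<Sum>z\<in>S-{y}. w y z)))"
    using assms(2) by (intro sum.cong refl) (simp add: balanced_def)
  finally show ?thesis by simp
qed

section \<open>Swap moves\<close>

lemma swap_at_swap_at: "i < length xs \<Longrightarrow> j < length xs \<Longrightarrow> swap_at (swap_at xs i j) i j = xs"
  by (auto simp: swap_at_def list_eq_iff_nth_eq nth_list_update)

lemma mset_swap_at: "i < length xs \<Longrightarrow> j < length xs \<Longrightarrow> mset (swap_at xs i j) = mset xs"
  by (cases "i = j") (simp_all add: swap_at_def list_update_swap mset_swap)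

lemma swap_move_sym:
  assumes "i < length \<mu>" "j < length \<mu>"
  shows "(\<mu> ! i \<noteq> \<mu> ! j \<and> \<nu> = swap_at \<mu> i j) \<longleftrightarrow> (\<nu> ! i \<noteq> \<nu> ! j \<and> \<mu> = swap_at \<nu> i j)"
  using assms swap_at_swap_at[of i \<mu> j] swap_at_swap_at[of i \<nu> j]
  by (cases "i = j") (auto simp: swap_at_def nth_list_update)

lemma swap_weight_nonneg: "0 \<le> a \<Longrightarrow> 0 \<le> b \<Longrightarrow> 0 \<le> swap_weight a b \<mu> \<nu>"
  unfolding swap_weight_def Let_def by (intro add_nonneg_nonneg sum_nonneg) auto

lemma swap_weight_equal_rates:
  "swap_weight b b \<mu> \<nu> =
     (\<Sum>k\<in>{0..<length \<mu> - 1}. if \<mu> ! k \<noteq> \<mu> ! (k+1) \<and> \<nu> = swap_at \<mu> k (k+1) then b else 0)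
     + (if 2 \<le> length \<mu> \<and> \<mu> ! 0 \<noteq> \<mu> ! (length \<mu> - 1) \<and> \<nu> = swap_at \<mu> 0 (length \<mu> - 1) then b else 0)"
  by (simp add: swap_weight_def Let_def cong: if_cong)

lemma swap_weight_sym:
  assumes "length \<nu> = length \<mu>"
  shows "swap_weight b b \<mu> \<nu> = swap_weight b b \<nu> \<mu>"
proof -
  let ?n = "length \<mu>"
  have "(\<mu> ! k \<noteq> \<mu> ! (k+1) \<and> \<nu> = swap_at \<mu> k (k+1)) \<longleftrightarrow> (\<nu> ! k \<noteq> \<nu> ! (k+1) \<and> \<mu> = swap_at \<nu> k (k+1))"
    if "k \<in> {0..<?n-1}" for k
    using swap_move_sym[of k \<mu> "k+1" \<nu>] that by auto
  then have "(\<Sum>k\<in>{0..<?n-1}. if \<mu> ! k \<noteq> \<mu> ! (k+1) \<and> \<nu> = swap_at \<mu> k (k+1) then b else 0)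
      = (\<Sum>k\<in>{0..<?n-1}. if \<nu> ! k \<noteq> \<nu> ! (k+1) \<and> \<mu> = swap_at \<nu> k (k+1) then b else 0)"
    by (intro sum.cong refl if_cong) simp_all
  moreover have "(2 \<le> ?n \<and> \<mu> ! 0 \<noteq> \<mu> ! (?n-1) \<and> \<nu> = swap_at \<mu> 0 (?n-1))
      \<longleftrightarrow> (2 \<le> ?n \<and> \<nu> ! 0 \<noteq> \<nu> ! (?n-1) \<and> \<mu> = swap_at \<nu> 0 (?n-1))"
  proof (cases "2 \<le> ?n")
    case True
    then have "0 < ?n" "?n - 1 < ?n" by auto
    from swap_move_sym[OF this, of \<nu>] True show ?thesis by blast
  qed simp
  ultimately show ?thesis
    unfolding swap_weight_equal_rates[of b \<mu>] swap_weight_equal_rates[of b \<nu>] assms by simp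
qed

lemma swap_weight_mset:
  assumes "swap_weight a b \<mu> \<nu> \<noteq> 0"
  shows "mset \<nu> = mset \<mu>"
proof -
  have "\<exists>i j. i < length \<mu> \<and> j < length \<mu> \<and> \<nu> = swap_at \<mu> i j"
  proof (rule ccontr)
    assume none: "\<nexists>i j. i < length \<mu> \<and> j < length \<mu> \<and> \<nu> = swap_at \<mu> i j"
    have "\<nu> \<noteq> swap_at \<mu> k (k+1)" if "k \<in> {0..<length \<mu> - 1}" for k
    proof -
      from that have "k < length \<mu>" "k + 1 < length \<mu>" by auto
      with none show ?thesis by blast
    qed
    moreover have "\<not> (2 \<le> length \<mu> \<and> \<nu> = swap_at \<mu> 0 (length \<mu> - 1))"
    proof
      assume "2 \<le> length \<mu> \<and> \<nu> = swap_at \<mu> 0 (length \<mu> - 1)"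
      moreover from this have "0 < length \<mu>" "length \<mu> - 1 < length \<mu>" by auto
      ultimately show False using none by blast
    qed
    ultimately have "swap_weight a b \<mu> \<nu> = 0" by (auto simp: swap_weight_def Let_def)
    with assms show False ..
  qed
  then show ?thesis using mset_swap_at by blast
qed

lemma swap_weight_detailed_balance:
  fixes u :: real
  assumes "length \<nu> = length \<mu>"
  shows "u ^ sum_list \<mu> * swap_weight b b \<mu> \<nu> = u ^ sum_list \<nu> * swap_weight b b \<nu> \<mu>"
proof (cases "swap_weight b b \<mu> \<nu> = 0")
  case False
  then have "sum_list \<nu> = sum_list \<mu>" by (metis swap_weight_mset sum_mset_sum_list)
  then show ?thesis using assms swap_weight_sym by simp
qed (use assms swap_weight_sym in simp)

lemma swap_weight_three:
  "swap_weight a b [x0,x1,x2] y =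
     (if x0 \<noteq> x1 \<and> y = [x1,x0,x2] then (if x0 > x1 then a else b) else 0)
   + (if x1 \<noteq> x2 \<and> y = [x0,x2,x1] then (if x1 > x2 then a else b) else 0)
   + (if x0 \<noteq> x2 \<and> y = [x2,x1,x0] then (if x2 > x0 then a else b) else 0)"
  by (simp add: swap_weight_def swap_at_def numeral_2_eq_2 atLeast0LessThan lessThan_Suc)

section \<open>The ASEP on three sites\<close>

lemma length_three_cases: "length x = 3 \<Longrightarrow> \<exists>x0 x1 x2. x = [x0,x1,x2]"
  by (cases x; cases "tl x"; cases "tl (tl x)") (auto simp: numeral_3_eq_3)

lemma rearrangements_three:
  "rearrangements [a,b,c] = {[a,b,c],[a,c,b],[b,a,c],[b,c,a],[c,a,b],[c,b,a]}"
proof -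
  have "mset \<mu> = mset [a,b,c] \<longleftrightarrow> \<mu> \<in> {[a,b,c],[a,c,b],[b,a,c],[b,c,a],[c,a,b],[c,b,a]}" for \<mu>
  proof
    assume h: "mset \<mu> = mset [a,b,c]"
    then have "length \<mu> = 3" by (metis size_mset length_Cons list.size(3) numeral_3_eq_3)
    then obtain x y z where "\<mu> = [x,y,z]"
      by (metis (no_types) length_0_conv length_Suc_conv numeral_3_eq_3)
    with h show "\<mu> \<in> {[a,b,c],[a,c,b],[b,a,c],[b,c,a],[c,a,b],[c,b,a]}"
      by (auto simp: add_eq_conv_ex add_mset_commute)
  qed (auto simp: add_mset_commute)
  then show ?thesis by (auto simp: rearrangements_def)
qed

lemma ASEP_w_three: "ASEP_w t [x0,x1,x2] y = swap_weight (t/3) (1/3) [x0,x1,x2] y"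
  by (simp add: ASEP_w_def)

text \<open>The orientation is \<open>1\<close> for cyclically decreasing words such as \<open>[2,1,0]\<close>, \<open>-1\<close> for
  cyclically increasing ones, and \<open>0\<close> when two entries coincide.\<close>

definition orientation :: "nat list \<Rightarrow> real" where
  "orientation x = sgn (real (x!0) - x!1) + sgn (real (x!1) - x!2) + sgn (real (x!2) - x!0)"

lemma orientation_three: "orientation [x0,x1,x2] \<in> {-1, 0, 1}"
  by (auto simp: orientation_def sgn_if)

lemma orientation_rev: "length x = 3 \<Longrightarrow> orientation (rev x) = - orientation x"
  by (auto simp: orientation_def sgn_if dest!: length_three_cases)

definition asep_weight :: "real \<Rightarrow> nat list \<Rightarrow> real" where
  "asep_weight t x = 3 * (1 + t) + (1 - t) * orientation x"

lemma asep_weight_pos: "0 \<le> t \<Longrightarrow> 0 < asep_weight t [x0,x1,x2]"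
  using orientation_three[of x0 x1 x2] by (auto simp: asep_weight_def)

lemma asep_weight_balanced:
  assumes "1 \<le> a" "1 \<le> b"
  shows "balanced (rearrangements [a,b,0]) (ASEP_w t) (asep_weight t)"
proof (cases "a = b")
  case True
  then have "rearrangements [a,b,0] = {[a,a,0],[a,0,a],[0,a,a]}"
    by (auto simp: rearrangements_three)
  with assms show ?thesis
    unfolding balanced_def
    by (simp add: sum_diff1 ASEP_w_three swap_weight_three asep_weight_def orientation_def field_simps)
next
  case False
  with assms show ?thesis
    unfolding balanced_def rearrangements_three
    by (simp add: sum_diff1 ASEP_w_three swap_weight_three asep_weight_def orientation_def field_simps)
qed

lemma ASEP_irreducible:
  assumes "1 \<le> a" "1 \<le> b" "0 \<le> t"
  shows "irreducible_chain (rearrangements [a,b,0]) (ASEP_w t)"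
proof -
  let ?cs = "[[a,b,0],[0,b,a],[b,0,a],[b,a,0],[0,a,b],[a,0,b]]"
  have S: "rearrangements [a,b,0] = set ?cs" by (auto simp: rearrangements_three)
  have "set (zip ?cs (rotate1 ?cs)) \<subseteq> transition_graph (set ?cs) (ASEP_w t)"
    using assms by (auto simp: transition_graph_def ASEP_w_three swap_weight_three)
  then show ?thesis unfolding irreducible_chain_def S by (blast intro: rtrancl_cycle)
qed

lemma ASEP_Pr_ratio:
  assumes "1 \<le> a" "1 \<le> b" "0 \<le> t" "\<mu> \<in> rearrangements [a,b,0]" "\<nu> \<in> rearrangements [a,b,0]"
  shows "ASEP_Pr t [a,b,0] \<mu> / ASEP_Pr t [a,b,0] \<nu> = asep_weight t \<mu> / asep_weight t \<nu>"
  unfolding ASEP_Pr_def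
proof (rule stationary_dist_ratio)
  show "finite (rearrangements [a,b,0])" by (simp add: rearrangements_three)
  show "nonneg_rates (rearrangements [a,b,0]) (ASEP_w t)"
    using assms(3) by (simp add: nonneg_rates_def ASEP_w_def swap_weight_nonneg)
  show "\<forall>x\<in>rearrangements [a,b,0]. 0 < asep_weight t x"
    using assms(3) by (auto simp: rearrangements_three asep_weight_pos)
  show "irreducible_chain (rearrangements [a,b,0]) (ASEP_w t)" by (rule ASEP_irreducible[OF assms(1-3)])
  show "balanced (rearrangements [a,b,0]) (ASEP_w t) (asep_weight t)"
    by (rule asep_weight_balanced[OF assms(1,2)])
qed (fact assms)+

section \<open>The DASEP\<close>

lemma finite_DASEP_states: "finite (DASEP_states n p q)"
proof (rule finite_subset)
  show "DASEP_states n p q \<subseteq> {xs. set xs \<subseteq> {0..p} \<and> length xs = n}"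
    by (auto simp: DASEP_states_def)
qed (simp add: finite_lists_length_eq)

lemma num_nonzero_update:
  "(v = 0 \<longleftrightarrow> xs ! k = 0) \<Longrightarrow> num_nonzero (xs[k := v]) = num_nonzero xs"
  by (induction xs arbitrary: k) (auto simp: num_nonzero_def split: nat.split)

lemma num_nonzero_mset: "mset x = mset y \<Longrightarrow> num_nonzero x = num_nonzero y"
  by (metis num_nonzero_def mset_filter size_mset)

lemma DASEP_states_mset_eq:
  assumes "mset x = mset y"
  shows "x \<in> DASEP_states n p q \<longleftrightarrow> y \<in> DASEP_states n p q"
proof -
  have "length x = length y" "set x = set y" "num_nonzero x = num_nonzero y"
    using mset_eq_length[OF assms] mset_eq_setD[OF assms] num_nonzero_mset[OF assms] by simp_all
  then show ?thesis by (simp add: DASEP_states_def)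
qed

lemma rev_DASEP_states: "x \<in> DASEP_states n p q \<Longrightarrow> rev x \<in> DASEP_states n p q"
  by (auto simp: DASEP_states_def num_nonzero_def rev_filter[symmetric])

lemma DASEP_states_dec:
  assumes "\<mu> \<in> DASEP_states n p q" "k < n" "2 \<le> \<mu> ! k"
  shows "\<mu>[k := \<mu> ! k - 1] \<in> DASEP_states n p q"
proof -
  have "set (\<mu>[k := \<mu> ! k - 1]) \<subseteq> insert (\<mu> ! k - 1) (set \<mu>)" by (rule set_update_subset_insert)
  moreover have "\<mu> ! k \<le> p" using assms nth_mem by (fastforce simp: DASEP_states_def)
  ultimately show ?thesis using assms by (auto simp: DASEP_states_def num_nonzero_update)
qed

lemma DASEP_states_three:
  "[x0,x1,x2] \<in> DASEP_states 3 p 2 \<longleftrightarrow> x0 \<le> p \<and> x1 \<le> p \<and> x2 \<le> p \<and>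
     ((x0 = 0 \<and> x1 \<noteq> 0 \<and> x2 \<noteq> 0) \<or> (x0 \<noteq> 0 \<and> x1 = 0 \<and> x2 \<noteq> 0) \<or> (x0 \<noteq> 0 \<and> x1 \<noteq> 0 \<and> x2 = 0))"
  by (auto simp: DASEP_states_def num_nonzero_def)

lemma DASEP_states_cases:
  "x \<in> DASEP_states 3 p q \<Longrightarrow> \<exists>x0 x1 x2. x = [x0,x1,x2]"
  by (auto simp: DASEP_states_def intro: length_three_cases)

lemma DASEP_w_nonneg: "0 \<le> t \<Longrightarrow> 0 \<le> u \<Longrightarrow> 0 \<le> DASEP_w p t u \<mu> \<nu>"
  unfolding DASEP_w_def Let_def by (intro add_nonneg_nonneg swap_weight_nonneg sum_nonneg) auto

lemma DASEP_w_ge_site_term: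
  assumes "0 \<le> t" "0 \<le> u" "k < length \<mu>"
  shows "(if 1 \<le> \<mu> ! k \<and> \<mu> ! k \<le> p - 1 \<and> \<nu> = \<mu>[k := \<mu> ! k + 1] then u / (3 * length \<mu>) else 0)
       + (if 2 \<le> \<mu> ! k \<and> \<nu> = \<mu>[k := \<mu> ! k - 1] then 1 / (3 * length \<mu>) else 0)
       \<le> DASEP_w p t u \<mu> \<nu>"
proof -
  let ?g = "\<lambda>k. (if 1 \<le> \<mu> ! k \<and> \<mu> ! k \<le> p - 1 \<and> \<nu> = \<mu>[k := \<mu> ! k + 1] then u / (3 * length \<mu>) else 0)
       + (if 2 \<le> \<mu> ! k \<and> \<nu> = \<mu>[k := \<mu> ! k - 1] then 1 / (3 * length \<mu>) else 0)"
  have "?g k \<le> (\<Sum>k\<in>{0..<length \<mu>}. ?g k)"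
    using assms by (intro member_le_sum) auto
  also have "\<dots> \<le> DASEP_w p t u \<mu> \<nu>"
    unfolding DASEP_w_def Let_def le_add_same_cancel2 using assms by (simp add: swap_weight_nonneg)
  finally show ?thesis .
qed

lemma DASEP_transition_dec:
  assumes "\<mu> \<in> DASEP_states n p q" "k < n" "2 \<le> \<mu> ! k" "0 \<le> t" "0 \<le> u"
  shows "(\<mu>, \<mu>[k := \<mu> ! k - 1]) \<in> transition_graph (DASEP_states n p q) (DASEP_w p t u)"
proof (rule transition_graphI[OF assms(1) DASEP_states_dec[OF assms(1-3)]])
  have n: "length \<mu> = n" using assms(1) by (simp add: DASEP_states_def)
  have "\<mu>[k := \<mu> ! k - 1] ! k \<noteq> \<mu> ! k" using assms(2,3) n by simp
  then show "\<mu> \<noteq> \<mu>[k := \<mu> ! k - 1]" by metis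
  have "1 / (3 * length \<mu>) \<le> DASEP_w p t u \<mu> (\<mu>[k := \<mu> ! k - 1])"
    by (rule order_trans[OF _ DASEP_w_ge_site_term[OF assms(4,5)]]) (use assms(2,3,5) n in simp_all)
  then show "1 / (3 * n) \<le> DASEP_w p t u \<mu> (\<mu>[k := \<mu> ! k - 1])" using n by simp
  show "0 < 1 / real (3 * n)" using assms(2) by simp
qed

lemma DASEP_transition_inc:
  assumes "\<mu> \<in> DASEP_states n p q" "\<mu>[k := Suc (\<mu> ! k)] \<in> DASEP_states n p q" "k < n"
    "1 \<le> \<mu> ! k" "\<mu> ! k < p" "0 \<le> t" "0 < u"
  shows "(\<mu>, \<mu>[k := Suc (\<mu> ! k)]) \<in> transition_graph (DASEP_states n p q) (DASEP_w p t u)"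
proof (rule transition_graphI[OF assms(1,2)])
  have n: "length \<mu> = n" using assms(1) by (simp add: DASEP_states_def)
  have "\<mu>[k := Suc (\<mu> ! k)] ! k \<noteq> \<mu> ! k" using assms(3) n by simp
  then show "\<mu> \<noteq> \<mu>[k := Suc (\<mu> ! k)]" by metis
  have "\<mu> ! k \<le> p - 1" using assms(5) by simp
  then have "u / (3 * length \<mu>) \<le> DASEP_w p t u \<mu> (\<mu>[k := Suc (\<mu> ! k)])"
    by (intro order_trans[OF _ DASEP_w_ge_site_term[OF assms(6) less_imp_le[OF assms(7)]]])
      (use assms(3,4) n in simp_all)
  then show "u / (3 * n) \<le> DASEP_w p t u \<mu> (\<mu>[k := Suc (\<mu> ! k)])" using n by simp
  show "0 < u / real (3 * n)" using assms(3,7) by simp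
qed

lemma growth_move_balance:
  fixes u r :: real
  assumes "k < length \<mu>" "\<nu> ! k \<le> p"
  shows "u ^ sum_list \<mu> * (if 1 \<le> \<mu> ! k \<and> \<mu> ! k \<le> p - 1 \<and> \<nu> = \<mu>[k := \<mu> ! k + 1] then u / r else 0)
       = u ^ sum_list \<nu> * (if 2 \<le> \<nu> ! k \<and> \<mu> = \<nu>[k := \<nu> ! k - 1] then 1 / r else 0)"
proof (cases "1 \<le> \<mu> ! k \<and> \<mu> ! k \<le> p - 1 \<and> \<nu> = \<mu>[k := \<mu> ! k + 1]")
  case True
  then have "2 \<le> \<nu> ! k \<and> \<mu> = \<nu>[k := \<nu> ! k - 1]" using assms(1) by auto
  moreover have "sum_list \<nu> = Suc (sum_list \<mu>)"
    using True assms(1) elem_le_sum_list[of k \<mu>] by (simp add: sum_list_update)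
  ultimately show ?thesis using True by (simp add: mult_ac)
next
  case False
  have no_shrink: "\<not> (2 \<le> \<nu> ! k \<and> \<mu> = \<nu>[k := \<nu> ! k - 1])"
  proof
    assume *: "2 \<le> \<nu> ! k \<and> \<mu> = \<nu>[k := \<nu> ! k - 1]"
    then have "k < length \<nu>" using assms(1) by simp
    with * assms(2) have "1 \<le> \<mu> ! k \<and> \<mu> ! k \<le> p - 1 \<and> \<nu> = \<mu>[k := \<mu> ! k + 1]" by auto
    with False show False ..
  qed
  show ?thesis by (simp only: if_not_P[OF False] if_not_P[OF no_shrink] mult_zero_right)
qed

lemma DASEP_detailed_balance:
  assumes "\<mu> \<in> DASEP_states n p q" "\<nu> \<in> DASEP_states n p q"
  shows "u ^ sum_list \<mu> * DASEP_w p 1 u \<mu> \<nu> = u ^ sum_list \<nu> * DASEP_w p 1 u \<nu> \<mu>"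
proof -
  have len: "length \<mu> = n" "length \<nu> = n" using assms by (simp_all add: DASEP_states_def)
  have le_p: "\<mu> ! k \<le> p" "\<nu> ! k \<le> p" if "k < n" for k
  proof -
    have "\<mu> ! k \<in> set \<mu>" "\<nu> ! k \<in> set \<nu>" using that len by simp_all
    with assms show "\<mu> ! k \<le> p" "\<nu> ! k \<le> p" by (auto simp: DASEP_states_def)
  qed
  define r where "r = real (3 * n)"
  define grow where "grow x y k = (if 1 \<le> x ! k \<and> x ! k \<le> p - 1 \<and> y = x[k := x ! k + 1] then u / r else 0)"
    for x y :: "nat list" and k
  define shrink where "shrink x y k = (if 2 \<le> x ! k \<and> y = x[k := x ! k - 1] then 1 / r else 0)"
    for x y :: "nat list" and k
  have w: "DASEP_w p 1 u x y = swap_weight (1 / r) (1 / r) x y + (\<Sum>k\<in>{0..<n}. grow x y k + shrink x y k)"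
    if "length x = n" for x y
    unfolding DASEP_w_def Let_def r_def grow_def shrink_def that by simp
  have growth: "u ^ sum_list \<mu> * (grow \<mu> \<nu> k + shrink \<mu> \<nu> k) = u ^ sum_list \<nu> * (grow \<nu> \<mu> k + shrink \<nu> \<mu> k)"
    if "k \<in> {0..<n}" for k
  proof -
    have "u ^ sum_list \<mu> * grow \<mu> \<nu> k = u ^ sum_list \<nu> * shrink \<nu> \<mu> k"
      unfolding grow_def shrink_def using that len le_p by (intro growth_move_balance) auto
    moreover have "u ^ sum_list \<nu> * grow \<nu> \<mu> k = u ^ sum_list \<mu> * shrink \<mu> \<nu> k"
      unfolding grow_def shrink_def using that len le_p by (intro growth_move_balance) auto
    ultimately show ?thesis by (simp add: distrib_left)
  qed
  have "u ^ sum_list \<mu> * DASEP_w p 1 u \<mu> \<nu>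
      = u ^ sum_list \<mu> * swap_weight (1/r) (1/r) \<mu> \<nu> + (\<Sum>k\<in>{0..<n}. u ^ sum_list \<mu> * (grow \<mu> \<nu> k + shrink \<mu> \<nu> k))"
    by (simp add: w len distrib_left sum_distrib_left)
  also have "\<dots> = u ^ sum_list \<nu> * swap_weight (1/r) (1/r) \<nu> \<mu> + (\<Sum>k\<in>{0..<n}. u ^ sum_list \<nu> * (grow \<nu> \<mu> k + shrink \<nu> \<mu> k))"
    using swap_weight_detailed_balance[of \<nu> \<mu> u] len growth by simp
  also have "\<dots> = u ^ sum_list \<nu> * DASEP_w p 1 u \<nu> \<mu>"
    by (simp add: w len distrib_left sum_distrib_left)
  finally show ?thesis .
qed

lemma sum_upto_three: "(\<Sum>k\<in>{0..<3::nat}. f k) = f 0 + f 1 + (f 2 :: 'a::comm_monoid_add)"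
proof -
  have "{0..<3::nat} = {0,1,2}" by auto
  then show ?thesis by (simp add: add_ac)
qed

lemma DASEP_w_three:
  "DASEP_w p t u [x0,x1,x2] y = swap_weight (t/9) (1/9) [x0,x1,x2] y
   + (if (1 \<le> x0 \<and> x0 \<le> p - 1) \<and> y = [Suc x0,x1,x2] then u/9 else 0)
   + (if 2 \<le> x0 \<and> y = [x0 - 1,x1,x2] then 1/9 else 0)
   + (if (1 \<le> x1 \<and> x1 \<le> p - 1) \<and> y = [x0,Suc x1,x2] then u/9 else 0)
   + (if 2 \<le> x1 \<and> y = [x0,x1 - 1,x2] then 1/9 else 0)
   + (if (1 \<le> x2 \<and> x2 \<le> p - 1) \<and> y = [x0,x1,Suc x2] then u/9 else 0)
   + (if 2 \<le> x2 \<and> y = [x0,x1,x2 - 1] then 1/9 else 0)"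
proof -
  have len: "length [x0,x1,x2] = 3" and rate: "real (3 * 3) = 9" by simp_all
  show ?thesis unfolding DASEP_w_def Let_def len rate sum_upto_three by (simp split del: if_split)
qed

text \<open>Every state is joined in both directions to \<open>[1,1,0]\<close>: lower an entry above 1 (and
  raise it back) until all entries are at most 1; the three remaining states form a cycle of
  swaps.\<close>

lemma DASEP_irreducible:
  assumes "1 \<le> p" "0 \<le> t" "0 < u"
  shows "irreducible_chain (DASEP_states 3 p 2) (DASEP_w p t u)"
proof -
  let ?S = "DASEP_states 3 p 2" and ?E = "transition_graph (DASEP_states 3 p 2) (DASEP_w p t u)"
  have hub_cycle: "([1,1,0],[0,1,1]) \<in> ?E" "([0,1,1],[1,0,1]) \<in> ?E" "([1,0,1],[1,1,0]) \<in> ?E"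
    using assms by (auto simp: transition_graph_def DASEP_states_three DASEP_w_three swap_weight_three)
  have "(x, [1,1,0]) \<in> ?E\<^sup>* \<and> ([1,1,0], x) \<in> ?E\<^sup>*" if "x \<in> ?S" for x
    using that
  proof (induction "sum_list x" arbitrary: x rule: less_induct)
    case less
    have len: "length x = 3" using less.prems by (simp add: DASEP_states_def)
    show ?case
    proof (cases "\<exists>k<3. 2 \<le> x ! k")
      case True
      then obtain k where k: "k < 3" "2 \<le> x ! k" by blast
      define x' where "x' = x[k := x ! k - 1]"
      have x': "x' \<in> ?S" unfolding x'_def by (rule DASEP_states_dec[OF less.prems k])
      have "x ! k \<in> set x" using k(1) len by simp
      with less.prems have "x ! k \<le> p" by (auto simp: DASEP_states_def)
      with k len have x'k: "1 \<le> x' ! k" "x' ! k < p" "x'[k := Suc (x' ! k)] = x"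
        by (simp_all add: x'_def)
      have "x ! k \<le> sum_list x" using k(1) len by (simp add: elem_le_sum_list)
      with k len have "sum_list x' < sum_list x" by (simp add: x'_def sum_list_update)
      with less.hyps x' have IH: "(x', [1,1,0]) \<in> ?E\<^sup>*" "([1,1,0], x') \<in> ?E\<^sup>*" by blast+
      have "(x, x') \<in> ?E"
        unfolding x'_def by (rule DASEP_transition_dec[OF less.prems k assms(2) less_imp_le[OF assms(3)]])
      moreover have "(x', x) \<in> ?E"
        using DASEP_transition_inc[OF x' _ k(1) x'k(1,2) assms(2,3)] less.prems unfolding x'k(3) by simp
      ultimately show ?thesis
        using IH converse_rtrancl_into_rtrancl rtrancl_into_rtrancl by metis
    next
      case False
      obtain x0 x1 x2 where x: "x = [x0,x1,x2]" using DASEP_states_cases[OF less.prems] by blast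
      have "x ! k \<le> 1" if "k < 3" for k using False that by auto
      from this[of 0] this[of 1] this[of 2] have "x0 \<le> 1" "x1 \<le> 1" "x2 \<le> 1" by (simp_all add: x)
      with less.prems x have "x = [1,1,0] \<or> x = [0,1,1] \<or> x = [1,0,1]"
        by (auto simp: DASEP_states_three)
      then show ?thesis
        using hub_cycle by (auto intro: converse_rtrancl_into_rtrancl)
    qed
  qed
  then show ?thesis unfolding irreducible_chain_def by (meson rtrancl_trans)
qed

lemma DASEP_Pd_ratio_t1:
  assumes "1 \<le> p" "0 < u" "\<mu> \<in> DASEP_states 3 p 2" "\<nu> \<in> DASEP_states 3 p 2"
  shows "DASEP_Pd 3 p 2 1 u \<mu> / DASEP_Pd 3 p 2 1 u \<nu> = u ^ sum_list \<mu> / u ^ sum_list \<nu>"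
  unfolding DASEP_Pd_def
proof (rule stationary_dist_ratio[OF finite_DASEP_states])
  show "nonneg_rates (DASEP_states 3 p 2) (DASEP_w p 1 u)"
    using assms(2) by (simp add: nonneg_rates_def DASEP_w_nonneg)
  show "irreducible_chain (DASEP_states 3 p 2) (DASEP_w p 1 u)"
    using DASEP_irreducible assms(1,2) by simp
  show "balanced (DASEP_states 3 p 2) (DASEP_w p 1 u) (\<lambda>x. u ^ sum_list x)"
    by (rule detailed_balance_imp_balanced) (rule DASEP_detailed_balance)
qed (use assms in auto)

section \<open>The drift of the orientation\<close>

lemma sum_single_neighbour:
  assumes "finite A" "P \<Longrightarrow> N \<in> A"
  shows "(\<Sum>y\<in>A. (if P \<and> y = N then c else 0) * (g y :: real)) = (if P then c * g N else 0)"
proof -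
  have "(\<Sum>y\<in>A. (if P \<and> y = N then c else 0) * g y) = (\<Sum>y\<in>A. if y = N then (if P then c * g N else 0) else 0)"
    by (rule sum.cong) auto
  then show ?thesis using assms by (auto simp: sum.delta')
qed

lemma DASEP_neighbour_sum:
  assumes "[x0,x1,x2] \<in> DASEP_states 3 p 2"
  shows "(\<Sum>y\<in>DASEP_states 3 p 2 - {[x0,x1,x2]}. DASEP_w p t u [x0,x1,x2] y * g y) =
     (if x0 \<noteq> x1 then (if x0 > x1 then t/9 else 1/9) * g [x1,x0,x2] else 0)
   + (if x1 \<noteq> x2 then (if x1 > x2 then t/9 else 1/9) * g [x0,x2,x1] else 0)
   + (if x0 \<noteq> x2 then (if x2 > x0 then t/9 else 1/9) * g [x2,x1,x0] else 0)
   + (if 1 \<le> x0 \<and> x0 \<le> p - 1 then u/9 * g [Suc x0,x1,x2] else 0)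
   + (if 2 \<le> x0 then 1/9 * g [x0 - 1,x1,x2] else 0)
   + (if 1 \<le> x1 \<and> x1 \<le> p - 1 then u/9 * g [x0,Suc x1,x2] else 0)
   + (if 2 \<le> x1 then 1/9 * g [x0,x1 - 1,x2] else 0)
   + (if 1 \<le> x2 \<and> x2 \<le> p - 1 then u/9 * g [x0,x1,Suc x2] else 0)
   + (if 2 \<le> x2 then 1/9 * g [x0,x1,x2 - 1] else 0)"
proof -
  let ?A = "DASEP_states 3 p 2 - {[x0,x1,x2]}"
  have fin: "finite ?A" using finite_DASEP_states by simp
  note sum_single_neighbour[OF fin]
  moreover have
    "x0 \<noteq> x1 \<Longrightarrow> [x1,x0,x2] \<in> ?A" "x1 \<noteq> x2 \<Longrightarrow> [x0,x2,x1] \<in> ?A" "x0 \<noteq> x2 \<Longrightarrow> [x2,x1,x0] \<in> ?A"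
    "(1 \<le> x0 \<and> x0 \<le> p - 1) \<Longrightarrow> [Suc x0,x1,x2] \<in> ?A" "2 \<le> x0 \<Longrightarrow> [x0 - 1,x1,x2] \<in> ?A"
    "(1 \<le> x1 \<and> x1 \<le> p - 1) \<Longrightarrow> [x0,Suc x1,x2] \<in> ?A" "2 \<le> x1 \<Longrightarrow> [x0,x1 - 1,x2] \<in> ?A"
    "(1 \<le> x2 \<and> x2 \<le> p - 1) \<Longrightarrow> [x0,x1,Suc x2] \<in> ?A" "2 \<le> x2 \<Longrightarrow> [x0,x1,x2 - 1] \<in> ?A"
    using assms by (auto simp: DASEP_states_three)
  ultimately show ?thesis
    unfolding DASEP_w_three swap_weight_three distrib_right sum.distrib
    by (simp only: not_False_eq_True)
qed

text \<open>A DASEP state on three sites has entries \<open>0, a, b\<close> with \<open>a, b \<ge> 1\<close>; \<open>unit_gap\<close> says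
  \<open>|a - b| = 1\<close>. Exactly from these states a single growth or decay move changes the
  orientation.\<close>

definition unit_gap :: "nat list \<Rightarrow> bool" where
  "unit_gap x \<longleftrightarrow> sum_list x + 1 = 2 * Max (set x)"

definition orientation_drift :: "real \<Rightarrow> real \<Rightarrow> nat list \<Rightarrow> real" where
  "orientation_drift t u x =
     (let c = (if unit_gap x then 1 + u else 0) in
      if orientation x = 1 then - (2 * (1 + 2 * t) + c) / 9
      else if orientation x = -1 then (2 * (2 + t) + c) / 9 else 0)"

lemma DASEP_orientation_drift:
  assumes "x \<in> DASEP_states 3 p 2"
  shows "(\<Sum>y\<in>DASEP_states 3 p 2 - {x}. DASEP_w p t u x y * (orientation y - orientation x))
    = orientation_drift t u x"
proof -
  obtain x0 x1 x2 where x: "x = [x0,x1,x2]" using DASEP_states_cases[OF assms] by blast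
  from assms obtain a b where ab: "1 \<le> a" "1 \<le> b" "a \<le> p" "b \<le> p"
    and "[x0,x1,x2] = [a,b,0] \<or> [x0,x1,x2] = [a,0,b] \<or> [x0,x1,x2] = [0,a,b]"
    unfolding x DASEP_states_three by (metis less_one not_le)
  then show ?thesis
    unfolding x DASEP_neighbour_sum[OF assms[unfolded x]]
    by (elim disjE) (auto simp: orientation_def orientation_drift_def unit_gap_def field_simps)
qed

lemma sum_orientation_pairs:
  assumes "\<And>x. x \<in> DASEP_states 3 p 2 \<Longrightarrow> orientation x = 0 \<Longrightarrow> f x = 0"
  shows "(\<Sum>x\<in>DASEP_states 3 p 2. f x) = (\<Sum>x\<in>{x \<in> DASEP_states 3 p 2. orientation x = 1}. f x + f (rev x))"
proof -
  let ?S = "DASEP_states 3 p 2"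
  define A where "A = {x \<in> ?S. orientation x = 1}"
  define B where "B = {x \<in> ?S. orientation x = -1}"
  have len: "length x = 3" if "x \<in> ?S" for x using that by (simp add: DASEP_states_def)
  have fin: "finite ?S" by (rule finite_DASEP_states)
  have "sum f ?S = sum f (?S - A) + sum f A"
    using fin by (intro sum.subset_diff) (auto simp: A_def)
  also have "sum f (?S - A) = sum f B"
  proof (rule sum.mono_neutral_right)
    show "\<forall>x\<in>?S - A - B. f x = 0"
      using assms orientation_three DASEP_states_cases by (fastforce simp: A_def B_def)
  qed (use fin in \<open>auto simp: A_def B_def\<close>)
  also have "B = rev ` A"
  proof
    show "rev ` A \<subseteq> B" using rev_DASEP_states orientation_rev len by (auto simp: A_def B_def)
    show "B \<subseteq> rev ` A"
    proof
      fix x assume "x \<in> B"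
      then have "rev x \<in> A" "x = rev (rev x)"
        using rev_DASEP_states orientation_rev len by (auto simp: A_def B_def)
      then show "x \<in> rev ` A" by blast
    qed
  qed
  also have "sum f (rev ` A) = (\<Sum>x\<in>A. f (rev x))"
    by (subst sum.reindex) (auto intro: inj_onI)
  finally show ?thesis by (simp add: A_def sum.distrib add.commute)
qed

lemma orientation_drift_pair:
  assumes "length x = 3" "orientation x = 1" "0 \<le> t"
    and "\<pi>' * asep_weight t x = \<pi> * asep_weight t (rev x)"
  shows "\<pi> * orientation_drift t u x + \<pi>' * orientation_drift t u (rev x)
    = - (\<pi> * (if unit_gap x then 1 + u else 0) * (1 - t) / (9 * (2 + t)))"
proof -
  have "\<pi>' * (2 * (2 + t)) = \<pi> * (2 * (1 + 2 * t))"
    using assms by (simp add: asep_weight_def orientation_rev algebra_simps)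
  moreover have "2 + t \<noteq> 0" using assms(3) by simp
  ultimately have \<pi>': "\<pi>' = \<pi> * (1 + 2 * t) / (2 + t)" by (simp add: field_simps)
  show ?thesis
    unfolding \<pi>' using assms(1-3) \<open>2 + t \<noteq> 0\<close>
    by (simp add: orientation_drift_def orientation_rev unit_gap_def Let_def field_simps)
qed

text \<open>Stationarity makes the expected drift vanish, while pairing each state of
  orientation 1 with its reversal turns it into a sum of nonpositive terms, strictly negative at
  \<open>[2,1,0]\<close>.\<close>

lemma DASEP_not_proportional_to_ASEP:
  assumes "2 \<le> p" "0 \<le> t" "t < 1" "0 < u"
    and bal: "balanced (DASEP_states 3 p 2) (DASEP_w p t u) \<pi>"
    and pos: "\<forall>x\<in>DASEP_states 3 p 2. 0 < \<pi> x"
    and ratio: "\<forall>x\<in>DASEP_states 3 p 2. \<pi> (rev x) * asep_weight t x = \<pi> x * asep_weight t (rev x)"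
  shows False
proof -
  let ?S = "DASEP_states 3 p 2"
  define A where "A = {x \<in> ?S. orientation x = 1}"
  define g where "g x = \<pi> x * (if unit_gap x then 1 + u else 0) * (1 - t) / (9 * (2 + t))" for x
  have "0 = (\<Sum>x\<in>?S. \<pi> x * orientation_drift t u x)"
    using balanced_generator_sum[OF finite_DASEP_states bal, of orientation]
    by (simp add: DASEP_orientation_drift)
  also have "\<dots> = (\<Sum>x\<in>A. \<pi> x * orientation_drift t u x + \<pi> (rev x) * orientation_drift t u (rev x))"
    unfolding A_def by (rule sum_orientation_pairs) (simp add: orientation_drift_def)
  also have "\<dots> = (\<Sum>x\<in>A. - g x)"
    using ratio assms(2) unfolding g_def
    by (intro sum.cong refl orientation_drift_pair) (auto simp: A_def DASEP_states_def)
  finally have "sum g A = 0" by (simp add: sum_negf)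
  moreover have "0 < sum g A"
  proof (rule sum_pos2)
    show "finite A" using finite_DASEP_states by (simp add: A_def)
    show "[2,1,0] \<in> A" using assms(1) by (simp add: A_def DASEP_states_three orientation_def)
    then show "0 < g [2,1,0]" using pos assms(2-4) by (simp add: A_def g_def unit_gap_def)
    show "0 \<le> g x" if "x \<in> A" for x
      using pos that assms(2-4) by (simp add: A_def g_def less_imp_le)
  qed
  ultimately show False by simp
qed

section \<open>Comparing the stationary ratios\<close>

lemma partition_two_nonzero:
  assumes "is_partition 3 lam" "num_nonzero lam = 2"
  obtains a b where "lam = [a,b,0]" "b \<le> a" "1 \<le> b"
proof -
  have "length lam = 3" using assms(1) by (simp add: is_partition_def)
  then obtain l0 l1 l2 where l: "lam = [l0,l1,l2]" using length_three_cases by blast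
  with assms show thesis by (intro that[of l0 l1]) (auto simp: is_partition_def num_nonzero_def split: if_splits)
qed

lemma sorted_state_partition:
  assumes "x \<in> DASEP_states n p q" "0 < n"
  defines "lam \<equiv> rev (sort x)"
  shows "is_partition n lam \<and> lam ! 0 \<le> p \<and> num_nonzero lam = q \<and> x \<in> rearrangements lam"
proof -
  have mset: "mset lam = mset x" by (simp add: lam_def)
  then have "lam \<in> DASEP_states n p q" using assms(1) DASEP_states_mset_eq by blast
  then have "lam ! 0 \<in> set lam" "set lam \<subseteq> {0..p}" "num_nonzero lam = q" "length lam = n"
    using assms(2) by (auto simp: DASEP_states_def)
  then have "lam ! 0 \<le> p" "num_nonzero lam = q" "length lam = n" by auto
  with mset show ?thesis by (simp add: is_partition_def rearrangements_def lam_def)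
qed

definition stationary_ratios_agree :: "nat \<Rightarrow> real \<Rightarrow> real \<Rightarrow> bool" where
  "stationary_ratios_agree p t u \<longleftrightarrow>
    (\<forall>lam. is_partition 3 lam \<and> lam ! 0 \<le> p \<and> num_nonzero lam = 2 \<longrightarrow>
       (\<forall>\<mu>\<in>rearrangements lam. \<forall>\<nu>\<in>rearrangements lam.
          ASEP_Pr t lam \<mu> / ASEP_Pr t lam \<nu> = DASEP_Pd 3 p 2 t u \<mu> / DASEP_Pd 3 p 2 t u \<nu>))"

lemma stationary_ratios_agree_t1:
  assumes "1 \<le> p" "0 < u"
  shows "stationary_ratios_agree p 1 u"
  unfolding stationary_ratios_agree_def
proof (intro allI impI ballI)
  fix lam \<mu> \<nu>
  assume lam: "is_partition 3 lam \<and> lam ! 0 \<le> p \<and> num_nonzero lam = 2"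
    and \<mu>: "\<mu> \<in> rearrangements lam" and \<nu>: "\<nu> \<in> rearrangements lam"
  then obtain a b where ab: "lam = [a,b,0]" "b \<le> a" "1 \<le> b"
    using partition_two_nonzero by blast
  then have "lam \<in> DASEP_states 3 p 2" using lam by (simp add: DASEP_states_three)
  moreover have "mset \<mu> = mset lam" "mset \<nu> = mset lam"
    using \<mu> \<nu> by (simp_all add: rearrangements_def)
  ultimately have "\<mu> \<in> DASEP_states 3 p 2" "\<nu> \<in> DASEP_states 3 p 2" "sum_list \<mu> = sum_list \<nu>"
    using DASEP_states_mset_eq by (blast, blast, metis sum_mset_sum_list)
  then have "DASEP_Pd 3 p 2 1 u \<mu> / DASEP_Pd 3 p 2 1 u \<nu> = 1"
    using DASEP_Pd_ratio_t1[OF assms] assms(2) by simp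
  moreover have "ASEP_Pr 1 lam \<mu> / ASEP_Pr 1 lam \<nu> = 1"
    using ASEP_Pr_ratio[of a b 1 \<mu> \<nu>] ab \<mu> \<nu> by (simp add: asep_weight_def)
  ultimately show "ASEP_Pr 1 lam \<mu> / ASEP_Pr 1 lam \<nu> = DASEP_Pd 3 p 2 1 u \<mu> / DASEP_Pd 3 p 2 1 u \<nu>"
    by simp
qed

lemma stationary_ratios_agree_imp_t1:
  assumes "2 \<le> p" "0 \<le> t" "t \<le> 1" "0 < u" "stationary_ratios_agree p t u"
  shows "t = 1"
proof (rule ccontr)
  assume "t \<noteq> 1"
  let ?S = "DASEP_states 3 p 2" and ?\<pi> = "DASEP_Pd 3 p 2 t u"
  have stat: "balanced ?S (DASEP_w p t u) ?\<pi> \<and> (\<forall>x\<in>?S. 0 < ?\<pi> x)"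
    unfolding DASEP_Pd_def using assms(1,2,4) finite_DASEP_states DASEP_states_three[of 1 1 0 p]
    by (intro stationary_dist_balanced_pos DASEP_irreducible)
      (auto simp: nonneg_rates_def DASEP_w_nonneg)
  have "?\<pi> (rev x) * asep_weight t x = ?\<pi> x * asep_weight t (rev x)" if "x \<in> ?S" for x
  proof -
    define lam where "lam = rev (sort x)"
    have lam: "is_partition 3 lam \<and> lam ! 0 \<le> p \<and> num_nonzero lam = 2"
      and x: "x \<in> rearrangements lam" "rev x \<in> rearrangements lam"
      using sorted_state_partition[OF that] by (simp_all add: lam_def rearrangements_def)
    then obtain a b where ab: "lam = [a,b,0]" "b \<le> a" "1 \<le> b"
      using partition_two_nonzero by blast
    have "ASEP_Pr t lam (rev x) / ASEP_Pr t lam x = ?\<pi> (rev x) / ?\<pi> x"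
      using assms(5) lam x unfolding stationary_ratios_agree_def by blast
    moreover have "ASEP_Pr t lam (rev x) / ASEP_Pr t lam x = asep_weight t (rev x) / asep_weight t x"
      using ASEP_Pr_ratio[of a b t] ab x assms(2) by simp
    moreover have "0 < ?\<pi> x" using stat that by blast
    moreover have "0 < asep_weight t x"
      using DASEP_states_cases[OF that] asep_weight_pos[OF assms(2)] by blast
    ultimately show ?thesis by (simp add: field_simps)
  qed
  with stat show False
    using DASEP_not_proportional_to_ASEP[OF assms(1,2) _ assms(4)] assms(3) \<open>t \<noteq> 1\<close> by auto
qed

theorem mainTheorem6:
  fixes p :: nat and t u :: real
  assumes "2 \<le> p" and "0 \<le> t" and "t \<le> 1" and "0 < u"
  shows "t = 1 \<longleftrightarrow>
    (\<forall>lam. is_partition 3 lam \<and> lam ! 0 \<le> p \<and> num_nonzero lam = 2 \<longrightarrow>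
       (\<forall>\<mu>\<in>rearrangements lam. \<forall>\<nu>\<in>rearrangements lam.
          ASEP_Pr t lam \<mu> / ASEP_Pr t lam \<nu> = DASEP_Pd 3 p 2 t u \<mu> / DASEP_Pd 3 p 2 t u \<nu>))"
  unfolding stationary_ratios_agree_def[symmetric]
  using assms stationary_ratios_agree_t1[of p u] stationary_ratios_agree_imp_t1[of p t u] by auto

end
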